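(* There is a constant $c>0$ such that for every integer $m\ge 1$ there exist two NFAs, each with $m+1$ states, over an alphabet of cardinality $2m$, such that there is a tower of height at least $c\cdot 2^{2m}$ between their languages and there is no infinite tower between their languages.
   Context: For strings $v=a_1\cdots a_k$ and $w$, $v\preccurlyeq w$ if $w\in\Sigma^*a_1\Sigma^*a_2\Sigma^*\cdots\Sigma^*a_k\Sigma^*$. A sequence $(w_i)_{i=1}^r$ of strings is a tower between languages $K$ and $L$ if $w_1\in K\cup L$ and for all $i=1,\dots,r-1$: $w_i\preccurlyeq w_{i+1}$, $w_i\in K$ implies $w_{i+1}\in L$, and $w_i\in L$ implies $w_{i+1}\in K$; $r$ is its height. An infinite tower is an infinite sequence with the same properties. *)

theory Defs
  imports Complex_Main "HOL-Library.Sublist"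
begin

record ('q, 'a) nfa =
  states :: "'q set"
  alpha  :: "'a set"
  delta  :: "('q \<times> 'a \<times> 'q) set"
  init   :: "'q set"
  final  :: "'q set"

definition wf_nfa :: "('q, 'a) nfa \<Rightarrow> bool" where
  "wf_nfa A \<longleftrightarrow> finite (states A) \<and> finite (alpha A)
     \<and> delta A \<subseteq> states A \<times> alpha A \<times> states A
     \<and> init A \<subseteq> states A \<and> final A \<subseteq> states A"

fun reach :: "('q, 'a) nfa \<Rightarrow> 'q \<Rightarrow> 'a list \<Rightarrow> 'q \<Rightarrow> bool" where
  "reach A p [] q \<longleftrightarrow> p = q"
| "reach A p (a # w) q \<longleftrightarrow> (\<exists>p'. (p, a, p') \<in> delta A \<and> reach A p' w q)"

definition lang :: "('q, 'a) nfa \<Rightarrow> 'a list set" where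
  "lang A = {w. set w \<subseteq> alpha A \<and> (\<exists>p\<in>init A. \<exists>q\<in>final A. reach A p w q)}"

definition tower :: "'a list set \<Rightarrow> 'a list set \<Rightarrow> 'a list list \<Rightarrow> bool" where
  "tower K L ws \<longleftrightarrow> ws \<noteq> [] \<and> ws ! 0 \<in> K \<union> L \<and>
     (\<forall>i. Suc i < length ws \<longrightarrow>
        subseq (ws ! i) (ws ! Suc i) \<and>
        (ws ! i \<in> K \<longrightarrow> ws ! Suc i \<in> L) \<and>
        (ws ! i \<in> L \<longrightarrow> ws ! Suc i \<in> K))"

definition infinite_tower :: "'a list set \<Rightarrow> 'a list set \<Rightarrow> (nat \<Rightarrow> 'a list) \<Rightarrow> bool" where
  "infinite_tower K L w \<longleftrightarrow> w 0 \<in> K \<union> L \<and>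
     (\<forall>i. subseq (w i) (w (Suc i)) \<and>
        (w i \<in> K \<longrightarrow> w (Suc i) \<in> L) \<and>
        (w i \<in> L \<longrightarrow> w (Suc i) \<in> K))"

end

theory Submission
  imports Defs
begin

text \<open>For \<open>1 \<le> c < m\<close> the only transition of A on c that changes the state goes from
  state c down to a smaller state, and for \<open>c \<ge> m\<close> the same holds in B for the single state
  whose exit letter is c; so c occurs at most once in a word of L(A), respectively L(B), whose
  letters are at most c. Both languages are disjoint and closed under deleting a prefix ending in a
  nonzero letter. In an infinite tower all words eventually contain the maximal letter c, each
  exactly once, since the word or its successor lies in the language in which c is rare; cutting off
  everything up to c leaves an infinite tower over fewer letters. Over the letter 0 alone this is
  impossible, as the only such word of L(A) is the empty word, which is not in L(B).
  Conversely the ruler words of length i < 2^(2m-1) alternate between L(A) and L(B).\<close>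

lemma count_list_subseq_mono:
  "subseq u v \<Longrightarrow> count_list u c \<le> count_list v c"
  by (induction rule: list_emb.induct) auto

lemma subseq_after_unique_letter:
  assumes "subseq (x @ c # y) (x' @ c # y')" "c \<notin> set x'" "c \<notin> set y'"
  shows "subseq y y'"
proof -
  obtain us vs where 1: "x' @ c # y' = us @ vs" "subseq (c # y) vs"
    using list_emb_appendD[OF assms(1)] by blast
  obtain us' vs' where 2: "vs = us' @ c # vs'" "subseq y vs'"
    using list_emb_ConsD[OF 1(2)] by blast
  have "x' @ c # y' = (us @ us') @ c # vs'" using 1 2 by simp
  then have "y' = vs'" using append_Cons_eq_iff[OF assms(2,3)] by blast
  with 2 show ?thesis by simp
qed

definition max_letter_once :: "nat \<Rightarrow> nat list set \<Rightarrow> bool" where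
  "max_letter_once c K \<longleftrightarrow> (\<forall>w\<in>K. set w \<subseteq> {..c} \<longrightarrow> count_list w c \<le> 1)"

lemma infinite_tower_in_union: "infinite_tower K L w \<Longrightarrow> w i \<in> K \<union> L"
  by (induction i) (auto simp: infinite_tower_def)

lemma infinite_tower_subseq:
  assumes "infinite_tower K L w" "i \<le> j"
  shows "subseq (w i) (w j)"
  using assms(2)
proof (induction j rule: dec_induct)
  case (step j)
  then show ?case
    using assms(1) subseq_order.order_trans by (auto simp: infinite_tower_def)
qed simp

lemma infinite_tower_shift:
  "infinite_tower K L w \<Longrightarrow> infinite_tower K L (\<lambda>j. w (i + j))"
  using infinite_tower_in_union[of K L w i] by (auto simp: infinite_tower_def)

lemma infinite_tower_visits:
  assumes "infinite_tower K L w" "Z = K \<or> Z = L"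
  shows "w j \<in> Z \<or> w (Suc j) \<in> Z"
  using assms infinite_tower_in_union[OF assms(1), of j] by (auto simp: infinite_tower_def)

lemma infinite_tower_count_le:
  assumes tower: "infinite_tower K L w"
    and once: "max_letter_once c K \<or> max_letter_once c L"
    and bounded: "\<And>i. set (w i) \<subseteq> {..c}"
  shows "count_list (w j) c \<le> 1"
proof -
  obtain Z where Z: "Z = K \<or> Z = L" "max_letter_once c Z" using once by blast
  have "count_list (w j) c \<le> count_list (w (Suc j)) c"
    using tower by (auto simp: infinite_tower_def intro: count_list_subseq_mono)
  then show ?thesis
    using infinite_tower_visits[OF tower Z(1), of j] Z(2) bounded
    unfolding max_letter_once_def by fastforce
qed

text \<open>Disjointness makes membership of a suffix determine membership of the whole word.\<close>
lemma infinite_tower_suffixes: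
  assumes tower: "infinite_tower K L w" and disjoint: "K \<inter> L = {}"
    and split: "\<And>j. w j = x j @ c # y j \<and> c \<notin> set (x j) \<and> c \<notin> set (y j)"
    and suffix_K: "\<And>j. w j \<in> K \<Longrightarrow> y j \<in> K"
    and suffix_L: "\<And>j. w j \<in> L \<Longrightarrow> y j \<in> L"
  shows "infinite_tower K L y"
proof -
  have in_K: "y j \<in> K \<longleftrightarrow> w j \<in> K" and in_L: "y j \<in> L \<longleftrightarrow> w j \<in> L" for j
  proof -
    have "w j \<in> K \<union> L" by (rule infinite_tower_in_union[OF tower])
    then show "y j \<in> K \<longleftrightarrow> w j \<in> K" "y j \<in> L \<longleftrightarrow> w j \<in> L"
      using disjoint suffix_K[of j] suffix_L[of j] by blast+
  qed
  have "subseq (y j) (y (Suc j))" for j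
  proof -
    have "subseq (w j) (w (Suc j))" using tower by (simp add: infinite_tower_def)
    then have "subseq (x j @ c # y j) (x (Suc j) @ c # y (Suc j))"
      using split[of j] split[of "Suc j"] by simp
    then show ?thesis
      using split[of "Suc j"] by (blast intro: subseq_after_unique_letter)
  qed
  moreover have "y 0 \<in> K \<union> L"
    using infinite_tower_in_union[OF tower, of 0] in_K in_L by blast
  ultimately show ?thesis
    using tower unfolding infinite_tower_def in_K in_L by blast
qed

lemma infinite_tower_drop_max_letter:
  assumes tower: "infinite_tower K L w" and disjoint: "K \<inter> L = {}"
    and suffix_K: "\<And>x y. x @ c # y \<in> K \<Longrightarrow> y \<in> K"
    and suffix_L: "\<And>x y. x @ c # y \<in> L \<Longrightarrow> y \<in> L"
    and once: "max_letter_once c K \<or> max_letter_once c L"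
    and bounded: "\<And>i. set (w i) \<subseteq> {..c}"
  obtains y where "infinite_tower K L y" "\<And>i. set (y i) \<subseteq> {..<c}"
proof (cases "\<exists>i. c \<in> set (w i)")
  case False
  then have "set (w i) \<subseteq> {..<c}" for i
    using bounded[of i] by (auto simp: subset_iff order.order_iff_strict)
  with tower that show ?thesis by blast
next
  case True
  then obtain i where "c \<in> set (w i)" by blast
  define v where "v j = w (i + j)" for j
  have v_tower: "infinite_tower K L v"
    unfolding v_def by (rule infinite_tower_shift[OF tower])
  have "count_list (v j) c = 1" for j
  proof -
    have "c \<in> set (v j)"
      using \<open>c \<in> set (w i)\<close> infinite_tower_subseq[OF tower, of i "i + j"]
      unfolding v_def by (meson le_add1 subseq_order.order_trans subseq_singleton_left)
    moreover have "count_list (v j) c \<le> 1"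
      using infinite_tower_count_le[OF v_tower once] bounded by (simp add: v_def)
    ultimately show ?thesis by (simp add: count_list_0_iff le_Suc_eq)
  qed
  then have "\<forall>j. \<exists>x y. v j = x @ c # y \<and> c \<notin> set x \<and> c \<notin> set y"
    using count_list_Suc_split_first[of _ c 0] by (simp add: count_list_0_iff)
  then obtain x y where split: "\<And>j. v j = x j @ c # y j \<and> c \<notin> set (x j) \<and> c \<notin> set (y j)"
    by metis
  have "infinite_tower K L y"
    by (rule infinite_tower_suffixes[OF v_tower disjoint split]) (metis split suffix_K suffix_L)+
  moreover have "set (y j) \<subseteq> {..<c}" for j
    using bounded[of "i + j"] split[of j] by (auto simp: v_def order.order_iff_strict)
  ultimately show ?thesis using that by blast
qed

lemma no_infinite_tower_over_zero:
  assumes tower: "infinite_tower K L w" and zeros: "\<And>i. set (w i) \<subseteq> {0}"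
    and zeros_K: "\<And>v. v \<in> K \<Longrightarrow> set v \<subseteq> {0} \<Longrightarrow> v = []"
    and Nil_L: "[] \<notin> L"
  shows False
proof -
  obtain j where j: "w j \<in> L"
    using infinite_tower_visits[OF tower, of L 0] by blast
  then have "w (Suc j) \<in> K" using tower by (simp add: infinite_tower_def)
  then have "w (Suc j) = []" using zeros_K zeros by blast
  moreover have "subseq (w j) (w (Suc j))" using tower by (simp add: infinite_tower_def)
  ultimately have "w j = []" by simp
  with j Nil_L show False by simp
qed

theorem no_infinite_tower_by_max_letters:
  fixes K L :: "nat list set"
  assumes disjoint: "K \<inter> L = {}"
    and suffix_K: "\<And>x c y. 1 \<le> c \<Longrightarrow> x @ c # y \<in> K \<Longrightarrow> y \<in> K"
    and suffix_L: "\<And>x c y. 1 \<le> c \<Longrightarrow> x @ c # y \<in> L \<Longrightarrow> y \<in> L"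
    and once: "\<And>c. 1 \<le> c \<Longrightarrow> max_letter_once c K \<or> max_letter_once c L"
    and zeros_K: "\<And>v. v \<in> K \<Longrightarrow> set v \<subseteq> {0} \<Longrightarrow> v = []"
    and Nil_L: "[] \<notin> L"
  shows "infinite_tower K L w \<Longrightarrow> \<forall>i. set (w i) \<subseteq> {..<N} \<Longrightarrow> False"
proof (induction N arbitrary: w)
  case 0
  then show False
    using no_infinite_tower_over_zero[of K L w, OF _ _ zeros_K Nil_L] by simp
next
  case (Suc c)
  show False
  proof (cases "c = 0")
    case True
    with Suc.prems show False
      using no_infinite_tower_over_zero[of K L w, OF _ _ zeros_K Nil_L] by (simp add: lessThan_Suc)
  next
    case False
    then have "1 \<le> c" by simp
    then have "\<And>x y. x @ c # y \<in> K \<Longrightarrow> y \<in> K" "\<And>x y. x @ c # y \<in> L \<Longrightarrow> y \<in> L"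
      using suffix_K suffix_L by blast+
    moreover have "set (w i) \<subseteq> {..c}" for i
      using Suc.prems(2) by (simp add: lessThan_Suc_atMost)
    ultimately obtain y where "infinite_tower K L y" "\<And>i. set (y i) \<subseteq> {..<c}"
      using infinite_tower_drop_max_letter[OF Suc.prems(1) disjoint] once[OF \<open>1 \<le> c\<close>] by blast
    then show False using Suc.IH by blast
  qed
qed

lemma reach_append: "reach A p (u @ v) q \<longleftrightarrow> (\<exists>r. reach A p u r \<and> reach A r v q)"
  by (induction u arbitrary: p) auto

lemma reach_snoc: "reach A p (w @ [a]) q \<longleftrightarrow> (\<exists>r. reach A p w r \<and> (r, a, q) \<in> delta A)"
  by (simp add: reach_append)

lemma reach_self_loop: "(\<And>a. a \<in> set w \<Longrightarrow> (p, a, p) \<in> delta A) \<Longrightarrow> reach A p w p"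
  by (induction w) auto

definition trans_A :: "nat \<Rightarrow> nat \<Rightarrow> nat \<Rightarrow> nat \<Rightarrow> bool" where
  "trans_A m p a q \<longleftrightarrow>
     (1 \<le> p \<and> p < m \<and> (a < p \<and> q = p \<or> a = p \<and> q < p))
   \<or> (p = m \<and> a < 2 * m - 1 \<and> (q = m \<or> m \<le> a \<and> q < m))"

definition trans_B :: "nat \<Rightarrow> nat \<Rightarrow> nat \<Rightarrow> nat \<Rightarrow> bool" where
  "trans_B m p a q \<longleftrightarrow>
     (p = 1 \<and> (a < m \<and> q = 1 \<or> a = 0 \<and> q = 0))
   \<or> (2 \<le> p \<and> p \<le> m \<and> (a < m + p - 2 \<and> q = p \<or> a = m + p - 2 \<and> 1 \<le> q \<and> q < p))"

definition nfa_A :: "nat \<Rightarrow> (nat, nat) nfa" where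
  "nfa_A m = \<lparr>states = {..m}, alpha = {..<2 * m}, delta = {(p, a, q). trans_A m p a q},
     init = {..m}, final = {0}\<rparr>"

definition nfa_B :: "nat \<Rightarrow> (nat, nat) nfa" where
  "nfa_B m = \<lparr>states = {..m}, alpha = {..<2 * m}, delta = {(p, a, q). trans_B m p a q},
     init = {1..m}, final = {0}\<rparr>"

lemma nfa_A_simps [simp]:
  "states (nfa_A m) = {..m}" "alpha (nfa_A m) = {..<2 * m}"
  "(p, a, q) \<in> delta (nfa_A m) \<longleftrightarrow> trans_A m p a q"
  by (simp_all add: nfa_A_def)

lemma nfa_B_simps [simp]:
  "states (nfa_B m) = {..m}" "alpha (nfa_B m) = {..<2 * m}"
  "(p, a, q) \<in> delta (nfa_B m) \<longleftrightarrow> trans_B m p a q"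
  by (simp_all add: nfa_B_def)

lemma wf_nfa_A: "wf_nfa (nfa_A m)"
  by (auto simp: wf_nfa_def nfa_A_def trans_A_def)

lemma wf_nfa_B: "1 \<le> m \<Longrightarrow> wf_nfa (nfa_B m)"
  by (auto simp: wf_nfa_def nfa_B_def trans_B_def)

lemma lang_A_iff:
  "w \<in> lang (nfa_A m) \<longleftrightarrow> set w \<subseteq> {..<2 * m} \<and> (\<exists>p\<le>m. reach (nfa_A m) p w 0)"
  by (auto simp: lang_def nfa_A_def)

lemma lang_B_iff:
  "w \<in> lang (nfa_B m) \<longleftrightarrow> set w \<subseteq> {..<2 * m} \<and> (\<exists>p\<in>{1..m}. reach (nfa_B m) p w 0)"
  by (auto simp: lang_def nfa_B_def)

lemma reach_A_from_0: "1 \<le> m \<Longrightarrow> reach (nfa_A m) 0 w q \<longleftrightarrow> w = [] \<and> q = 0"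
  by (cases w) (auto simp: trans_A_def)

lemma lang_A_inter_lang_B: "1 \<le> m \<Longrightarrow> lang (nfa_A m) \<inter> lang (nfa_B m) = {}"
proof safe
  fix w assume "1 \<le> m" "w \<in> lang (nfa_A m)" "w \<in> lang (nfa_B m)"
  then obtain p q where A: "reach (nfa_A m) p w 0" and B: "reach (nfa_B m) q w 0" "1 \<le> q"
    by (auto simp: lang_A_iff lang_B_iff)
  then have "w \<noteq> []" by auto
  then obtain v a where "w = v @ [a]" by (cases w rule: rev_cases) auto
  txt \<open>Only letter 0 enters the final state of B, and it never enters that of A.\<close>
  with A B \<open>1 \<le> m\<close> show "w \<in> {}" by (auto simp: reach_snoc trans_A_def trans_B_def)
qed

lemma lang_A_suffix:
  assumes "x @ c # y \<in> lang (nfa_A m)"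
  shows "y \<in> lang (nfa_A m)"
proof -
  obtain r r' where "trans_A m r c r'" "reach (nfa_A m) r' y 0" "set y \<subseteq> {..<2 * m}"
    using assms by (auto simp: lang_A_iff reach_append)
  moreover from \<open>trans_A m r c r'\<close> have "r' \<le> m" by (auto simp: trans_A_def)
  ultimately show ?thesis by (auto simp: lang_A_iff)
qed

lemma lang_B_suffix:
  assumes "1 \<le> c" "x @ c # y \<in> lang (nfa_B m)"
  shows "y \<in> lang (nfa_B m)"
proof -
  obtain r r' where "trans_B m r c r'" "reach (nfa_B m) r' y 0" "set y \<subseteq> {..<2 * m}"
    using assms(2) by (auto simp: lang_B_iff reach_append)
  moreover from \<open>trans_B m r c r'\<close> \<open>1 \<le> c\<close> have "r' \<in> {1..m}" by (auto simp: trans_B_def)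
  ultimately show ?thesis by (auto simp: lang_B_iff)
qed

lemma reach_A_max_letter:
  assumes "reach (nfa_A m) p w 0" "set w \<subseteq> {..c}" "c < m"
  shows "p \<le> c \<and> count_list w c \<le> of_bool (p = c)"
  using assms(1,2)
proof (induction w arbitrary: p)
  case (Cons a w)
  then obtain p' where "trans_A m p a p'" "reach (nfa_A m) p' w 0" by auto
  with Cons.IH[of p'] Cons.prems(2) \<open>c < m\<close> show ?case
    by (auto simp: trans_A_def)
qed simp

text \<open>The letter on which state p of B moves to a smaller nonzero state, or to 0 if p = 1.\<close>
definition exit_letter_B :: "nat \<Rightarrow> nat \<Rightarrow> nat" where
  "exit_letter_B m p = (if p \<le> 1 then 0 else m + p - 2)"

lemma reach_B_max_letter:
  assumes "reach (nfa_B m) p w 0" "set w \<subseteq> {..c}" "m \<le> c" "1 \<le> m"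
  shows "exit_letter_B m p \<le> c \<and> count_list w c \<le> of_bool (exit_letter_B m p = c)"
  using assms(1,2)
proof (induction w arbitrary: p)
  case (Cons a w)
  then obtain p' where "trans_B m p a p'" "reach (nfa_B m) p' w 0" by auto
  with Cons.IH[of p'] Cons.prems(2) \<open>m \<le> c\<close> \<open>1 \<le> m\<close> show ?case
    by (auto simp: trans_B_def exit_letter_B_def split: if_split_asm)
      (auto simp: of_bool_def split: if_splits)
qed (simp add: exit_letter_B_def)

lemma max_letter_once_A:
  assumes "c < m"
  shows "max_letter_once c (lang (nfa_A m))"
  unfolding max_letter_once_def
proof (intro ballI impI)
  fix w assume w: "w \<in> lang (nfa_A m)" "set w \<subseteq> {..c}"
  then obtain p where "reach (nfa_A m) p w 0" by (auto simp: lang_A_iff)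
  then have "count_list w c \<le> of_bool (p = c)"
    using reach_A_max_letter w(2) assms by blast
  then show "count_list w c \<le> 1" by (cases "p = c") auto
qed

lemma max_letter_once_B:
  assumes "1 \<le> m" "m \<le> c"
  shows "max_letter_once c (lang (nfa_B m))"
  unfolding max_letter_once_def
proof (intro ballI impI)
  fix w assume w: "w \<in> lang (nfa_B m)" "set w \<subseteq> {..c}"
  then obtain p where "reach (nfa_B m) p w 0" by (auto simp: lang_B_iff)
  then have "count_list w c \<le> of_bool (exit_letter_B m p = c)"
    using reach_B_max_letter w(2) assms by blast
  then show "count_list w c \<le> 1" by (cases "exit_letter_B m p = c") auto
qed

lemma lang_A_zeros:
  assumes "1 \<le> m" "w \<in> lang (nfa_A m)" "set w \<subseteq> {0}"
  shows "w = []"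
proof -
  obtain p where "reach (nfa_A m) p w 0" using assms(2) by (auto simp: lang_A_iff)
  moreover from this have "p = 0"
    using reach_A_max_letter[of m p w 0] assms(1,3) by (simp add: atMost_0)
  ultimately show ?thesis using reach_A_from_0[OF assms(1)] by simp
qed

lemma Nil_notin_lang_B: "[] \<notin> lang (nfa_B m)"
  by (auto simp: lang_B_iff)

lemma no_infinite_tower_A_B:
  assumes "1 \<le> m"
  shows "\<not> infinite_tower (lang (nfa_A m)) (lang (nfa_B m)) w"
proof
  assume tower: "infinite_tower (lang (nfa_A m)) (lang (nfa_B m)) w"
  show False
  proof (rule no_infinite_tower_by_max_letters[OF lang_A_inter_lang_B[OF \<open>1 \<le> m\<close>]])
    show "y \<in> lang (nfa_A m)" if "x @ c # y \<in> lang (nfa_A m)" for x c y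
      using that by (rule lang_A_suffix)
    show "y \<in> lang (nfa_B m)" if "1 \<le> c" "x @ c # y \<in> lang (nfa_B m)" for x c y
      using that by (rule lang_B_suffix)
    show "max_letter_once c (lang (nfa_A m)) \<or> max_letter_once c (lang (nfa_B m))" for c
      using max_letter_once_A max_letter_once_B \<open>1 \<le> m\<close> by (metis not_le)
    show "v = []" if "v \<in> lang (nfa_A m)" "set v \<subseteq> {0}" for v
      using lang_A_zeros \<open>1 \<le> m\<close> that by blast
    show "[] \<notin> lang (nfa_B m)" by (rule Nil_notin_lang_B)
    show "\<forall>i. set (w i) \<subseteq> {..<2 * m}"
      using infinite_tower_in_union[OF tower] by (auto simp: lang_A_iff lang_B_iff)
  qed (fact tower)
qed

text \<open>\<open>ruler k ! i = [\<nu> 1, ..., \<nu> i]\<close> with \<open>\<nu>\<close> the 2-adic valuation.\<close>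
primrec ruler :: "nat \<Rightarrow> nat list list" where
  "ruler 0 = [[]]"
| "ruler (Suc k) = ruler k @ map (\<lambda>u. last (ruler k) @ k # u) (ruler k)"

lemma length_ruler [simp]: "length (ruler k) = 2 ^ k"
  by (induction k) auto

lemma ruler_nth_Suc_cases:
  assumes "i < 2 ^ Suc k"
  shows "i < 2 ^ k \<and> ruler (Suc k) ! i = ruler k ! i
    \<or> (\<exists>j < 2 ^ k. i = 2 ^ k + j \<and> ruler (Suc k) ! i = last (ruler k) @ k # ruler k ! j)"
  using assms by (cases "i < 2 ^ k") (auto simp: nth_append intro!: exI[of _ "i - 2 ^ k"])

lemma ruler_not_Nil [simp]: "ruler k \<noteq> []"
  by (induction k) auto

lemma ruler_nth_0 [simp]: "ruler k ! 0 = []"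
  by (induction k) (auto simp: nth_append)

lemma last_ruler: "last (ruler k) = ruler k ! (2 ^ k - 1)"
  by (simp add: last_conv_nth)

lemma set_ruler_nth: "i < 2 ^ k \<Longrightarrow> set (ruler k ! i) \<subseteq> {..<k}"
proof (induction k arbitrary: i)
  case (Suc k)
  have "set (last (ruler k)) \<subseteq> {..<k}"
    using Suc.IH[of "2 ^ k - 1"] by (simp add: last_ruler)
  with ruler_nth_Suc_cases[OF Suc.prems] Suc.IH show ?case by fastforce
qed simp

lemma set_last_ruler: "set (last (ruler k)) \<subseteq> {..<k}"
  using set_ruler_nth[of "2 ^ k - 1" k] by (simp add: last_ruler)

lemma ruler_nth_Suc: "Suc i < 2 ^ k \<Longrightarrow> \<exists>a. ruler k ! Suc i = ruler k ! i @ [a]"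
proof (induction k arbitrary: i)
  case (Suc k)
  consider "Suc i < 2 ^ k" | "Suc i = 2 ^ k" | j where "i = 2 ^ k + j" "Suc j < 2 ^ k"
  proof (cases "Suc i \<le> 2 ^ k")
    case False
    with Suc.prems that(3)[of "i - 2 ^ k"] show thesis by simp
  qed (use that(1,2) in linarith)
  then show ?case
  proof cases
    case 1
    then show ?thesis using Suc.IH by (simp add: nth_append)
  next
    case 2
    then have "i = 2 ^ k - 1" by simp
    with 2 show ?thesis by (simp add: nth_append last_ruler)
  next
    case 3
    then show ?thesis using Suc.IH[of j] by (simp add: nth_append)
  qed
qed simp

lemma reach_A_block:
  assumes "set v \<subseteq> {..<k}" "1 \<le> k" "k < 2 * m - 1" "q \<le> min (k - 1) m"
    and "reach (nfa_A m) q u 0"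
  shows "reach (nfa_A m) (min k m) (v @ k # u) 0"
proof -
  have "reach (nfa_A m) (min k m) v (min k m)"
    by (rule reach_self_loop) (use assms(1,3) in \<open>auto simp: trans_A_def\<close>)
  moreover have "trans_A m (min k m) k q"
    using assms(2-4) by (auto simp: trans_A_def)
  ultimately show ?thesis using assms(5) by (auto simp: reach_append)
qed

lemma reach_B_block:
  assumes "set v \<subseteq> {..<k}" "k < 2 * m - 1" "q \<in> {1..max 1 (k + 1 - m)}"
    and "reach (nfa_B m) q u 0"
  shows "reach (nfa_B m) (max 1 (k + 2 - m)) (v @ k # u) 0"
proof -
  have "reach (nfa_B m) (max 1 (k + 2 - m)) v (max 1 (k + 2 - m))"
    by (rule reach_self_loop) (use assms(1,2) in \<open>auto simp: trans_B_def\<close>)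
  moreover have "trans_B m (max 1 (k + 2 - m)) k q"
    using assms(2,3) by (auto simp: trans_B_def)
  ultimately show ?thesis using assms(4) by (auto simp: reach_append)
qed

lemma reach_A_ruler:
  assumes "k \<le> 2 * m - 1" "i < 2 ^ k" "even i"
  shows "\<exists>q \<le> min (k - 1) m. reach (nfa_A m) q (ruler k ! i) 0"
  using assms
proof (induction k arbitrary: i)
  case (Suc k)
  from ruler_nth_Suc_cases[OF Suc.prems(2)] show ?case
  proof (elim disjE exE conjE)
    assume "i < 2 ^ k" "ruler (Suc k) ! i = ruler k ! i"
    with Suc.IH[of i] Suc.prems(1,3) obtain q
      where "q \<le> min (k - 1) m" "reach (nfa_A m) q (ruler (Suc k) ! i) 0"
      by auto
    then show ?thesis by (intro exI[of _ q]) auto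
  next
    fix j assume j: "j < 2 ^ k" "i = 2 ^ k + j" "ruler (Suc k) ! i = last (ruler k) @ k # ruler k ! j"
    with Suc.prems(3) have "1 \<le> k" "even j" by (auto intro: Nat.gr0I)
    with Suc.IH[of j] Suc.prems(1) j(1) obtain q where "q \<le> min (k - 1) m" "reach (nfa_A m) q (ruler k ! j) 0"
      by auto
    with reach_A_block[OF set_last_ruler \<open>1 \<le> k\<close>] Suc.prems(1) j(3) show ?thesis by fastforce
  qed
qed auto

lemma reach_B_ruler:
  assumes "1 \<le> m" "k \<le> 2 * m - 1" "i < 2 ^ k" "odd i"
  shows "\<exists>q \<in> {1..max 1 (k + 1 - m)}. reach (nfa_B m) q (ruler k ! i) 0"
  using assms(2-4)
proof (induction k arbitrary: i)
  case (Suc k)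
  from ruler_nth_Suc_cases[OF Suc.prems(2)] show ?case
  proof (elim disjE exE conjE)
    assume "i < 2 ^ k" "ruler (Suc k) ! i = ruler k ! i"
    with Suc.IH[of i] Suc.prems(1,3) obtain q
      where "q \<in> {1..max 1 (k + 1 - m)}" "reach (nfa_B m) q (ruler (Suc k) ! i) 0"
      by auto
    then show ?thesis by (intro bexI[of _ q]) auto
  next
    fix j assume j: "j < 2 ^ k" "i = 2 ^ k + j" "ruler (Suc k) ! i = last (ruler k) @ k # ruler k ! j"
    show ?thesis
    proof (cases "k = 0")
      case True
      with j have "ruler (Suc k) ! i = [0]" by simp
      moreover have "reach (nfa_B m) 1 [0] 0" by (simp add: trans_B_def)
      ultimately show ?thesis using \<open>1 \<le> m\<close> by auto
    next
      case False
      with Suc.prems(3) j(2) have "odd j" by simp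
      with Suc.IH[of j] Suc.prems(1) j(1) obtain q
        where "q \<in> {1..max 1 (k + 1 - m)}" "reach (nfa_B m) q (ruler k ! j) 0"
        by auto
      then have "reach (nfa_B m) (max 1 (k + 2 - m)) (ruler (Suc k) ! i) 0"
        using reach_B_block[OF set_last_ruler] Suc.prems(1) j(3) by simp
      then show ?thesis by (intro bexI[of _ "max 1 (k + 2 - m)"]) auto
    qed
  qed
qed simp

lemma tower_if_alternating:
  assumes "ws \<noteq> []" "K \<inter> L = {}"
    and subseq: "\<And>i. Suc i < length ws \<Longrightarrow> subseq (ws ! i) (ws ! Suc i)"
    and member: "\<And>i. i < length ws \<Longrightarrow> ws ! i \<in> (if even i then K else L)"
  shows "tower K L ws"
  unfolding tower_def
proof (intro conjI allI impI)
  show "ws \<noteq> []" "ws ! 0 \<in> K \<union> L"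
    using assms(1) member[of 0] by auto
  fix i assume i: "Suc i < length ws"
  then show "subseq (ws ! i) (ws ! Suc i)" by (rule subseq)
  have "ws ! i \<in> (if even i then K else L)" "ws ! Suc i \<in> (if odd i then K else L)"
    using i member[of i] member[of "Suc i"] by simp_all
  with \<open>K \<inter> L = {}\<close> show "ws ! i \<in> K \<Longrightarrow> ws ! Suc i \<in> L"
    by (cases "even i") auto
  from \<open>ws ! i \<in> _\<close> \<open>ws ! Suc i \<in> _\<close> \<open>K \<inter> L = {}\<close> show "ws ! i \<in> L \<Longrightarrow> ws ! Suc i \<in> K"
    by (cases "even i") auto
qed

lemma ruler_in_lang_A_B:
  assumes "1 \<le> m" "i < 2 ^ (2 * m - 1)"
  shows "ruler (2 * m - 1) ! i \<in> (if even i then lang (nfa_A m) else lang (nfa_B m))"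
proof -
  have letters: "set (ruler (2 * m - 1) ! i) \<subseteq> {..<2 * m}"
    using set_ruler_nth[OF assms(2)] by auto
  show ?thesis
  proof (cases "even i")
    case True
    then obtain q where "q \<le> m" "reach (nfa_A m) q (ruler (2 * m - 1) ! i) 0"
      using reach_A_ruler[of "2 * m - 1" m i] assms(2) by auto
    with True letters show ?thesis by (auto simp: lang_A_iff)
  next
    case False
    then obtain q where "q \<in> {1..max 1 (2 * m - 1 + 1 - m)}"
        "reach (nfa_B m) q (ruler (2 * m - 1) ! i) 0"
      using reach_B_ruler[OF assms(1), of "2 * m - 1" i] assms(2) by auto
    moreover have "max 1 (2 * m - 1 + 1 - m) \<le> m" using assms(1) by simp
    ultimately show ?thesis using False letters by (auto simp: lang_B_iff)
  qed
qed

lemma tower_A_B: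
  assumes "1 \<le> m"
  shows "tower (lang (nfa_A m)) (lang (nfa_B m)) (ruler (2 * m - 1))"
proof (rule tower_if_alternating[OF ruler_not_Nil lang_A_inter_lang_B[OF assms]])
  fix i
  show "subseq (ruler (2 * m - 1) ! i) (ruler (2 * m - 1) ! Suc i)"
    if "Suc i < length (ruler (2 * m - 1))"
    using ruler_nth_Suc[of i "2 * m - 1"] that by auto
  show "ruler (2 * m - 1) ! i \<in> (if even i then lang (nfa_A m) else lang (nfa_B m))"
    if "i < length (ruler (2 * m - 1))"
    using ruler_in_lang_A_B[OF assms] that by simp
qed

theorem theorem10:
  shows "\<exists>c::real. c > 0 \<and> (\<forall>m::nat. m \<ge> 1 \<longrightarrow>
     (\<exists>(A :: (nat, nat) nfa) (B :: (nat, nat) nfa).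
        wf_nfa A \<and> wf_nfa B \<and>
        card (states A) = m + 1 \<and> card (states B) = m + 1 \<and>
        alpha A = alpha B \<and> card (alpha A) = 2 * m \<and>
        (\<exists>ws. tower (lang A) (lang B) ws \<and> real (length ws) \<ge> c * 2 ^ (2 * m)) \<and>
        \<not> (\<exists>w. infinite_tower (lang A) (lang B) w)))"
proof (intro exI[of _ "1 / 2"] conjI allI impI)
  fix m :: nat assume "m \<ge> 1"
  have "(2::real) ^ (2 * m) = 2 * 2 ^ (2 * m - 1)"
    using \<open>m \<ge> 1\<close> by (simp flip: power_Suc)
  then have tower: "\<exists>ws. tower (lang (nfa_A m)) (lang (nfa_B m)) ws \<and>
      real (length ws) \<ge> 1 / 2 * 2 ^ (2 * m)"
    using tower_A_B[OF \<open>m \<ge> 1\<close>] by (intro exI[of _ "ruler (2 * m - 1)"]) simp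
  show "\<exists>(A :: (nat, nat) nfa) (B :: (nat, nat) nfa).
        wf_nfa A \<and> wf_nfa B \<and>
        card (states A) = m + 1 \<and> card (states B) = m + 1 \<and>
        alpha A = alpha B \<and> card (alpha A) = 2 * m \<and>
        (\<exists>ws. tower (lang A) (lang B) ws \<and> real (length ws) \<ge> 1 / 2 * 2 ^ (2 * m)) \<and>
        \<not> (\<exists>w. infinite_tower (lang A) (lang B) w)"
    by (rule exI[of _ "nfa_A m"], rule exI[of _ "nfa_B m"])
      (use wf_nfa_A wf_nfa_B tower no_infinite_tower_A_B \<open>m \<ge> 1\<close> in auto)
qed simp

end
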